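(* Let $X\subset\mathbb{R}^d$ be a complementary regular set, $f:\mathbb{R}^d\to\mathbb{R}$ a $C^2$ function, and $c$ a regular value of $f_{|X}$. Let $\eta:\mathbb{R}^d\to\mathbb{R}^d$ be smooth with $\sup_x\|\eta(x)\|\le1$, and $f_r(x)=f(x+r\eta(x))$. Then, in the Hausdorff distance, $\lim_{r\to0^+}\big(X^{-r}\cap f_r^{-1}(-\infty,c]\big)=X\cap f^{-1}(-\infty,c]$.
   Context: $d_A(x)=\inf_{a\in A}\|x-a\|$; $\mathcal{C}A:=\overline{\mathbb{R}^d\setminus A}$; $X^{-r}=\{x:d_{\mathcal{C}X}(x)\ge r\}$. Clarke gradient $\partial\phi(x)$: convex hull of limits $\lim_i\nabla\phi(x_i)$, $x_i\to x$, $\phi$ differentiable at $x_i$; $\Delta(B)=\inf_{b\in B}\|b\|$. Reach of closed $A$: supremum of $t\ge0$ such that every $x$ with $d_A(x)<t$ has a unique nearest point in $A$; $\operatorname{reach}_\mu(A)=\sup\{s:\Delta(\partial d_A(x))\ge\mu\text{ for all }x\text{ with }0<d_A(x)\le s\}$. Complementary regular: compact $X$ with $\overline{\operatorname{int}X}=X$, $\operatorname{reach}_\mu(X)>0$ for some $\mu\in(0,1]$, $\operatorname{reach}(\mathcal{C}X)>0$. Tangent cone $\operatorname{Tan}(A,x)$: cone generated by limits of $(x_n-x)/\|x_n-x\|$, $x_n\in A\setminus\{x\}$, $x_n\to x$; polar $B^\circ=\{u:\langle u,b\rangle\le0\ \forall b\in B\}$; $\operatorname{Nor}(A,x)=\operatorname{Tan}(A,x)^\circ$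 for $A$ of positive reach; $\operatorname{Nor}(X,x):=-\operatorname{Nor}(\mathcal{C}X,x)$ for $x\in\partial X$, $\{0\}$ for interior $x$. $x\in X$ is critical for $f_{|X}$ if $\nabla f(x)\in-\operatorname{Nor}(X,x)$; $c$ is regular if $X\cap f^{-1}(c)$ contains no critical point. *)

theory Defs
  imports "HOL-Analysis.Analysis"
begin

text \<open>Distance function d_A(x) is the library's infdist x A.\<close>

definition compl_closure :: "'a::euclidean_space set \<Rightarrow> 'a set" where
  "compl_closure A = closure (UNIV - A)"

definition inner_parallel :: "'a::euclidean_space set \<Rightarrow> real \<Rightarrow> 'a set" where
  "inner_parallel X r = {x. infdist x (compl_closure X) \<ge> r}"

definition clarke_gradient :: "('a::euclidean_space \<Rightarrow> real) \<Rightarrow> 'a \<Rightarrow> 'a set" where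
  "clarke_gradient \<phi> x = convex hull
     {v. \<exists>xs gs. xs \<longlonglongrightarrow> x \<and> (\<forall>i. GDERIV \<phi> (xs i) :> gs i) \<and> gs \<longlonglongrightarrow> v}"

definition Delta :: "'a::euclidean_space set \<Rightarrow> real" where
  "Delta B = Inf (norm ` B)"

definition reach :: "'a::euclidean_space set \<Rightarrow> ereal" where
  "reach A = Sup {ereal t | t. t \<ge> 0 \<and>
     (\<forall>x. infdist x A < t \<longrightarrow> (\<exists>!a. a \<in> A \<and> dist x a = infdist x A))}"

definition reach_mu :: "real \<Rightarrow> 'a::euclidean_space set \<Rightarrow> ereal" where
  "reach_mu \<mu> A = Sup {ereal s | s. s \<ge> 0 \<and>
     (\<forall>x. 0 < infdist x A \<and> infdist x A \<le> s \<longrightarrow>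
          Delta (clarke_gradient (\<lambda>y. infdist y A) x) \<ge> \<mu>)}"

definition complementary_regular :: "'a::euclidean_space set \<Rightarrow> bool" where
  "complementary_regular X \<longleftrightarrow> compact X \<and> closure (interior X) = X \<and>
     (\<exists>\<mu>. 0 < \<mu> \<and> \<mu> \<le> 1 \<and> reach_mu \<mu> X > 0) \<and> reach (compl_closure X) > 0"

definition unit_tangents :: "'a::euclidean_space set \<Rightarrow> 'a \<Rightarrow> 'a set" where
  "unit_tangents A x = {u. \<exists>xs. (\<forall>n. xs n \<in> A - {x}) \<and> xs \<longlonglongrightarrow> x \<and>
       (\<lambda>n. (1 / norm (xs n - x)) *\<^sub>R (xs n - x)) \<longlonglongrightarrow> u}"

definition tan_cone :: "'a::euclidean_space set \<Rightarrow> 'a \<Rightarrow> 'a set" where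
  "tan_cone A x = insert 0 {t *\<^sub>R u | t u. t \<ge> 0 \<and> u \<in> unit_tangents A x}"

definition polar :: "'a::euclidean_space set \<Rightarrow> 'a set" where
  "polar B = {u. \<forall>b\<in>B. inner u b \<le> 0}"

definition nor_cone :: "'a::euclidean_space set \<Rightarrow> 'a \<Rightarrow> 'a set" where
  "nor_cone A x = polar (tan_cone A x)"

definition nor_cone_X :: "'a::euclidean_space set \<Rightarrow> 'a \<Rightarrow> 'a set" where
  "nor_cone_X X x = (if x \<in> interior X then {0} else uminus ` nor_cone (compl_closure X) x)"

definition critical_point :: "('a::euclidean_space \<Rightarrow> real) \<Rightarrow> 'a set \<Rightarrow> 'a \<Rightarrow> bool" where
  "critical_point f X x \<longleftrightarrow> x \<in> X \<and>
     (\<exists>g. GDERIV f x :> g \<and> g \<in> uminus ` nor_cone_X X x)"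

definition regular_value :: "('a::euclidean_space \<Rightarrow> real) \<Rightarrow> 'a set \<Rightarrow> real \<Rightarrow> bool" where
  "regular_value f X c \<longleftrightarrow> (\<forall>x \<in> X \<inter> f -` {c}. \<not> critical_point f X x)"

fun Ck :: "nat \<Rightarrow> ('a::euclidean_space \<Rightarrow> real) \<Rightarrow> bool" where
  "Ck 0 f = continuous_on UNIV f"
| "Ck (Suc k) f = ((\<forall>x. f differentiable (at x)) \<and>
      (\<forall>i\<in>Basis. Ck k (\<lambda>x. frechet_derivative f (at x) i)))"

definition smooth_map :: "('a::euclidean_space \<Rightarrow> 'b::euclidean_space) \<Rightarrow> bool" where
  "smooth_map \<eta> \<longleftrightarrow> (\<forall>k. \<forall>b\<in>Basis. Ck k (\<lambda>x. inner (\<eta> x) b))"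

definition hausdorff_dist :: "'a::euclidean_space set \<Rightarrow> 'a set \<Rightarrow> ereal" where
  "hausdorff_dist A B =
     (if A = {} \<and> B = {} then 0
      else if A = {} \<or> B = {} then \<infinity>
      else max (SUP a\<in>A. ereal (infdist a B)) (SUP b\<in>B. ereal (infdist b A)))"

end

theory Submission
  imports Defs
begin

text \<open>Both inclusions are soft compactness arguments once every point b of X with f b \<le> c
  is known to be a limit of interior points y with f y < c: such a y lies in
  X^{-r} \<inter> f_r^{-1}(-\<infinity>, c] for all small r, while a point of X^{-r} with
  f_r \<le> c lies within r of the closed set {f \<le> c}.
  The approximation comes from descent. At an interior point with f b = c the gradient g is
  nonzero. At a boundary point, positive reach of C X yields a ball of radius s inside int X
  whose boundary passes through b; its inward unit normal u lies in Nor(C X, b), and since g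
  does not, the direction |g| u - g enters the ball and decreases f.
  Only differentiability of f, compactness, closure (int X) = X and reach (C X) > 0 are used.\<close>

lemma cosine_law_distance_bound:
  fixes d D h g c :: real
  assumes "0 \<le> d" "0 \<le> h" "h \<le> D" "0 \<le> g" "g \<le> 1"
    and "d\<^sup>2 \<le> D\<^sup>2 - 2 * h * D * c + h\<^sup>2" and "1 - g\<^sup>2 / 2 \<le> c"
  shows "d \<le> D - h * (1 - 2 * g)"
proof -
  have "h * D * (1 - g\<^sup>2 / 2) \<le> h * D * c"
    using assms by (intro mult_left_mono) auto
  moreover have "0 \<le> 4 * (D - h) + g * (4 * h - D)"
  proof (cases "D \<le> 4 * h")
    case False
    then have "g * (D - 4 * h) \<le> D - 4 * h" using assms by (simp add: mult_left_le_one_le)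
    then show ?thesis using assms by (simp add: algebra_simps)
  qed (use assms in auto)
  then have "0 \<le> h * g * (4 * (D - h) + g * (4 * h - D))"
    using assms by simp
  ultimately have "d\<^sup>2 \<le> (D - h * (1 - 2 * g))\<^sup>2"
    using assms(6) by (simp add: power2_eq_square algebra_simps)
  moreover have "0 \<le> D - h * (1 - 2 * g)"
    using assms mult_left_mono[of "1 - 2 * g" 1 h] by simp
  ultimately show ?thesis by (rule power2_le_imp_le)
qed

locale unique_nearest =
  fixes A :: "'a::euclidean_space set" and t :: real
  assumes closed_A: "closed A" and t_pos: "0 < t"
    and unique_nearest: "\<And>x. infdist x A < t \<Longrightarrow> \<exists>!a. a \<in> A \<and> dist x a = infdist x A"
begin

lemma nonempty: "A \<noteq> {}"
proof
  assume "A = {}"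
  then have "infdist 0 A < t" using t_pos by (simp add: infdist_def)
  with unique_nearest \<open>A = {}\<close> show False by blast
qed

definition nearest :: "'a \<Rightarrow> 'a" where
  "nearest x = (SOME a. a \<in> A \<and> dist x a = infdist x A)"

lemma nearest: "nearest x \<in> A" "dist x (nearest x) = infdist x A"
proof -
  obtain a where "a \<in> A" "infdist x A = dist x a"
    by (rule infdist_attains_inf[OF closed_A nonempty])
  then have "nearest x \<in> A \<and> dist x (nearest x) = infdist x A"
    unfolding nearest_def using someI[of "\<lambda>a. a \<in> A \<and> dist x a = infdist x A" a] by simp
  then show "nearest x \<in> A" "dist x (nearest x) = infdist x A" by auto
qed

lemma nearest_unique: "infdist x A < t \<Longrightarrow> a \<in> A \<Longrightarrow> dist x a = infdist x A \<Longrightarrow> a = nearest x"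
  using unique_nearest nearest by blast

lemma dist_nearest_le: "dist x (nearest y) \<le> infdist x A + 2 * dist x y"
proof -
  have "dist x (nearest y) \<le> dist x y + infdist y A"
    using dist_triangle[of x "nearest y" y] nearest by simp
  also have "infdist y A \<le> infdist x A + dist x y"
    using infdist_triangle[of y A x] by (simp add: dist_commute)
  finally show ?thesis by simp
qed

lemma continuous_on_nearest: "continuous_on {x. infdist x A < t} nearest"
  unfolding continuous_on_iff
proof (intro ballI allI impI)
  fix x and e :: real
  assume x: "x \<in> {x. infdist x A < t}" and e: "0 < e"
  define K where "K = cball x (infdist x A + 1) \<inter> (A \<inter> {p. e \<le> dist p (nearest x)})"
  obtain m where m: "0 < m" "\<And>p. p \<in> K \<Longrightarrow> infdist x A + m \<le> dist x p"
  proof (cases "K = {}")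
    case False
    have "compact K" unfolding K_def
      by (intro compact_Int_closed compact_cball closed_Int closed_A closed_Collect_le continuous_intros)
    moreover have "continuous_on K (\<lambda>p. dist x p)" by (intro continuous_intros)
    ultimately obtain p0 where p0: "p0 \<in> K" "\<And>p. p \<in> K \<Longrightarrow> dist x p0 \<le> dist x p"
      using continuous_attains_inf[OF _ False, of "\<lambda>p. dist x p"] by blast
    then have "p0 \<in> A" "p0 \<noteq> nearest x" using e by (auto simp: K_def)
    then have "dist x p0 \<noteq> infdist x A"
      using nearest_unique[of x p0] x by auto
    then have "infdist x A < dist x p0"
      using infdist_le[OF \<open>p0 \<in> A\<close>, of x] by linarith
    then show ?thesis using that[of "dist x p0 - infdist x A"] p0(2) by simp
  qed (use that[of 1] in auto)
  show "\<exists>d>0. \<forall>y\<in>{x. infdist x A < t}. dist y x < d \<longrightarrow> dist (nearest y) (nearest x) < e"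
  proof (intro exI[of _ "min 1 m / 2"] conjI ballI impI)
    show "0 < min 1 m / 2" using m by simp
    fix y assume "dist y x < min 1 m / 2"
    then have "dist x (nearest y) < infdist x A + min 1 m"
      using dist_nearest_le[of x y] by (auto simp: dist_commute min_def)
    then have "nearest y \<notin> K" using m(2)[of "nearest y"] by linarith
    then show "dist (nearest y) (nearest x) < e"
      using nearest(1)[of y] \<open>dist x (nearest y) < _\<close> by (auto simp: K_def)
  qed
qed

definition normal :: "'a \<Rightarrow> 'a" where
  "normal x = (1 / infdist x A) *\<^sub>R (x - nearest x)"

lemma normal:
  assumes "0 < infdist x A"
  shows "norm (normal x) = 1" and "x - nearest x = infdist x A *\<^sub>R normal x"
  using assms nearest[of x] by (auto simp: normal_def dist_norm norm_minus_commute)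

lemma continuous_on_normal: "continuous_on {x. 0 < infdist x A \<and> infdist x A < t} normal"
proof -
  have "continuous_on {x. 0 < infdist x A \<and> infdist x A < t} nearest"
    by (rule continuous_on_subset[OF continuous_on_nearest]) auto
  then show ?thesis unfolding normal_def by (intro continuous_intros) auto
qed

lemma infdist_gain_along_normal:
  assumes y: "0 < infdist y A" and y': "y' = y + h *\<^sub>R normal y" and h: "0 < h" "h \<le> infdist y' A"
    and g: "dist (normal y') (normal y) \<le> g" "g \<le> 1"
  shows "infdist y A + h * (1 - 2 * g) \<le> infdist y' A"
proof -
  define D where "D = infdist y' A"
  define c where "c = inner (normal y') (normal y)"
  have "0 < D" using h by (simp add: D_def)
  have n: "inner (normal y) (normal y) = 1" "inner (normal y') (normal y') = 1"
    using normal(1)[OF y] normal(1)[of y'] \<open>0 < D\<close> by (simp_all add: D_def dot_square_norm)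
  have "y - nearest y' = D *\<^sub>R normal y' - h *\<^sub>R normal y"
    using normal(2)[of y'] \<open>0 < D\<close> by (simp add: y' D_def algebra_simps)
  moreover have "(norm (D *\<^sub>R normal y' - h *\<^sub>R normal y))\<^sup>2 = D\<^sup>2 - 2 * h * D * c + h\<^sup>2"
    unfolding power2_norm_eq_inner
    by (simp add: c_def n inner_diff_left inner_diff_right inner_commute algebra_simps power2_eq_square)
  ultimately have "(norm (y - nearest y'))\<^sup>2 = D\<^sup>2 - 2 * h * D * c + h\<^sup>2" by simp
  moreover have "infdist y A \<le> norm (y - nearest y')"
    using infdist_le[OF nearest(1)] by (simp add: dist_norm)
  ultimately have "(infdist y A)\<^sup>2 \<le> D\<^sup>2 - 2 * h * D * c + h\<^sup>2"
    by (metis infdist_nonneg power_mono)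
  moreover have "(norm (normal y' - normal y))\<^sup>2 = 2 - 2 * c"
    unfolding power2_norm_eq_inner by (simp add: c_def n inner_diff_left inner_diff_right inner_commute)
  moreover have "(norm (normal y' - normal y))\<^sup>2 \<le> g\<^sup>2"
    using g by (intro power_mono) (auto simp: dist_norm)
  ultimately have "1 - g\<^sup>2 / 2 \<le> c" by simp
  moreover have "0 \<le> g" using g(1) zero_le_dist order_trans by blast
  ultimately show ?thesis
    using cosine_law_distance_bound[of "infdist y A" h D g c] infdist_nonneg[of y A]
      \<open>(infdist y A)\<^sup>2 \<le> _\<close> g(2) h
    by (simp add: D_def)
qed

lemma isCont_normal:
  assumes "0 < infdist y A" and "infdist y A < t"
  shows "isCont normal y"
proof -
  have "open {x. 0 < infdist x A \<and> infdist x A < t}"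
    by (intro open_Collect_conj open_Collect_less continuous_intros)
  with continuous_on_normal assms show ?thesis
    by (simp add: continuous_on_eq_continuous_at)
qed

lemma eventually_infdist_gain_along_normal:
  assumes y: "0 < infdist y A" "infdist y A < t" and \<theta>: "0 < \<theta>" "\<theta> \<le> 1"
  shows "eventually (\<lambda>h. 0 < h \<and> infdist y A + h * (1 - \<theta>) \<le> infdist (y + h *\<^sub>R normal y) A)
    (at_right 0)"
proof -
  have "((\<lambda>h. y + h *\<^sub>R normal y) \<longlongrightarrow> y + 0 *\<^sub>R normal y) (at_right 0)"
    by (intro tendsto_intros)
  then have "((\<lambda>h. normal (y + h *\<^sub>R normal y)) \<longlongrightarrow> normal y) (at_right 0)"
    using isCont_tendsto_compose[OF isCont_normal[OF y]] by simp
  then have "eventually (\<lambda>h. dist (normal (y + h *\<^sub>R normal y)) (normal y) < \<theta> / 2) (at_right 0)"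
    by (rule tendstoD) (simp add: \<theta>(1))
  moreover have "eventually (\<lambda>h. 0 < h \<and> h < infdist y A / 2) (at_right 0)"
    unfolding eventually_at_right_field using y(1) by (intro exI[of _ "infdist y A / 2"]) auto
  ultimately show ?thesis
  proof eventually_elim
    case (elim h)
    have "dist (y + h *\<^sub>R normal y) y = h"
      using normal(1)[OF y(1)] elim by (simp add: dist_norm)
    then have "h \<le> infdist (y + h *\<^sub>R normal y) A"
      using infdist_triangle[of y A "y + h *\<^sub>R normal y"] elim by (simp add: dist_commute)
    from infdist_gain_along_normal[OF y(1) refl _ this less_imp_le[OF elim(1)]] elim \<theta>(2)
    show ?case by simp
  qed
qed

lemma push_along_normal:
  assumes y: "0 < infdist y A" "infdist y A < s" and "s < t" and k: "0 < k"
  obtains y' where "infdist y A < infdist y' A" "infdist y' A \<le> s"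
    and "dist y' a - infdist y' A \<le> dist y a - infdist y A + k * (infdist y' A - infdist y A)"
proof -
  define \<theta> where "\<theta> = k / (1 + k)"
  have \<theta>: "0 < \<theta>" "\<theta> < 1" "\<theta> = k * (1 - \<theta>)" using k by (auto simp: \<theta>_def field_simps)
  have "infdist y A < t" using y(2) \<open>s < t\<close> by linarith
  have "eventually (\<lambda>h. h < s - infdist y A) (at_right 0)"
    unfolding eventually_at_right_field using y(2) by (intro exI[of _ "s - infdist y A"]) auto
  moreover note eventually_infdist_gain_along_normal[OF y(1) \<open>infdist y A < t\<close> \<theta>(1) less_imp_le[OF \<theta>(2)]]
  ultimately have "eventually (\<lambda>h. h < s - infdist y A \<and>
      0 < h \<and> infdist y A + h * (1 - \<theta>) \<le> infdist (y + h *\<^sub>R normal y) A) (at_right 0)"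
    by (rule eventually_conj)
  then obtain h where h: "0 < h" "h < s - infdist y A"
    and gain: "infdist y A + h * (1 - \<theta>) \<le> infdist (y + h *\<^sub>R normal y) A"
    using eventually_happens'[OF trivial_limit_at_right_real] by blast
  define y' where "y' = y + h *\<^sub>R normal y"
  have "dist y' y = h" using normal(1)[OF y(1)] h by (simp add: y'_def dist_norm)
  then have "infdist y' A \<le> infdist y A + h" "dist y' a \<le> dist y a + h"
    using infdist_triangle[of y' A y] dist_triangle[of y' a y] by (auto simp: dist_commute)
  moreover have "h * \<theta> = k * (h * (1 - \<theta>))" using \<theta>(3) by (metis mult.left_commute)
  moreover have "k * (h * (1 - \<theta>)) \<le> k * (infdist y' A - infdist y A)"
    using gain k by (intro mult_left_mono) (auto simp: y'_def)
  moreover have "0 < h * (1 - \<theta>)" using h(1) \<theta>(2) by simp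
  ultimately show ?thesis
    using that[of y'] gain h(2) by (simp add: y'_def algebra_simps)
qed

lemma far_point_near_normal_ray:
  assumes a: "a \<in> A" and y0: "infdist y0 A = dist y0 a" "0 < infdist y0 A" "infdist y0 A \<le> s"
    and "s < t" and k: "0 < k" "k \<le> 1"
  shows "\<exists>y. infdist y A = s \<and> dist y a \<le> (1 + k) * s"
proof -
  define d0 where "d0 = infdist y0 A"
  have d0: "0 < d0" "d0 \<le> s" using y0 by (auto simp: d0_def)
  txt \<open>On W the excess dist y a - infdist y A is at most k times the distance to A gained
    since y0. Pushing along the normal preserves this, so the distance to A attains the value s
    on W.\<close>
  define W where "W = cball a (2 * s) \<inter> ({y. d0 \<le> infdist y A} \<inter> ({y. infdist y A \<le> s} \<inter>
    {y. dist y a - infdist y A \<le> k * (infdist y A - d0)}))"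
  have "compact W" unfolding W_def
    by (intro compact_Int_closed compact_cball closed_Int closed_Collect_le continuous_intros)
  moreover have "y0 \<in> W"
  proof -
    have "dist a y0 \<le> 2 * s" using y0 dist_commute[of a y0] by linarith
    then show ?thesis using y0 d0 by (simp add: W_def d0_def dist_commute)
  qed
  moreover have "continuous_on W (\<lambda>y. infdist y A)" by (intro continuous_intros)
  ultimately obtain y where "y \<in> W" and y_max: "\<And>z. z \<in> W \<Longrightarrow> infdist z A \<le> infdist y A"
    using continuous_attains_sup[of W "\<lambda>y. infdist y A"] by blast
  then have y: "d0 \<le> infdist y A" "infdist y A \<le> s"
    "dist y a - infdist y A \<le> k * (infdist y A - d0)"
    by (auto simp: W_def)
  have "infdist y A = s"
  proof (rule ccontr)
    assume "infdist y A \<noteq> s"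
    with y d0 obtain y' where y': "infdist y A < infdist y' A" "infdist y' A \<le> s"
      "dist y' a - infdist y' A \<le> dist y a - infdist y A + k * (infdist y' A - infdist y A)"
      using push_along_normal[of y s k a] \<open>s < t\<close> k(1) by force
    then have excess: "dist y' a - infdist y' A \<le> k * (infdist y' A - d0)"
      using y(3) by (simp add: algebra_simps)
    moreover have "k * (infdist y' A - d0) \<le> s"
      using k d0 y(1) y' mult_left_le_one_le[of "infdist y' A - d0" k] by linarith
    ultimately have "y' \<in> W" using y(1) y' by (auto simp: W_def dist_commute)
    then show False using y_max[of y'] y'(1) by simp
  qed
  moreover have "k * (infdist y A - d0) \<le> k * s" using k d0 y by (intro mult_left_mono) auto
  ultimately show ?thesis using y(3) by (auto simp: algebra_simps)
qed

lemma touching_point_if_approx: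
  assumes a: "a \<in> A" and s: "0 < s"
    and approx: "\<And>e. 0 < e \<Longrightarrow> \<exists>x. infdist x A = s \<and> dist x a < s + e"
  shows "\<exists>x. infdist x A = s \<and> dist x a = s"
proof -
  define S where "S = cball a (2 * s) \<inter> {x. infdist x A = s}"
  have "compact S" unfolding S_def
    by (intro compact_Int_closed compact_cball closed_Collect_eq continuous_intros)
  moreover have "S \<noteq> {}"
  proof -
    obtain x where "infdist x A = s" "dist x a < s + s" using approx[OF s] by blast
    then have "x \<in> S" by (simp add: S_def dist_commute)
    then show ?thesis by blast
  qed
  moreover have "continuous_on S (\<lambda>x. dist x a)" by (intro continuous_intros)
  ultimately obtain x0 where x0: "x0 \<in> S" "\<And>x. x \<in> S \<Longrightarrow> dist x0 a \<le> dist x a"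
    using continuous_attains_inf[of S "\<lambda>x. dist x a"] by blast
  have "dist x0 a \<le> s"
  proof (rule ccontr)
    assume "\<not> dist x0 a \<le> s"
    then obtain x where x: "infdist x A = s" "dist x a < dist x0 a"
      using approx[of "dist x0 a - s"] by auto
    moreover have "dist x0 a \<le> 2 * s" using x0(1) by (simp add: S_def dist_commute)
    ultimately have "x \<in> S" by (simp add: S_def dist_commute)
    then show False using x0(2)[of x] x(2) by linarith
  qed
  moreover have "s \<le> dist x0 a" using infdist_le[OF a, of x0] x0(1) by (simp add: S_def)
  ultimately show ?thesis using x0(1) by (auto simp: S_def)
qed

lemma touching_point_from_nearest:
  assumes a: "a \<in> A" and y: "infdist y A = dist y a" "0 < infdist y A" "infdist y A \<le> s"
    and "s < t"
  shows "\<exists>x. infdist x A = s \<and> dist x a = s"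
proof -
  have "0 < s" using y by linarith
  show ?thesis
  proof (rule touching_point_if_approx[OF a \<open>0 < s\<close>])
    fix e :: real assume "0 < e"
    define k where "k = min 1 (e / (2 * s))"
    have k: "0 < k" "k \<le> 1" using \<open>0 < e\<close> \<open>0 < s\<close> by (auto simp: k_def)
    have "k * s \<le> e / (2 * s) * s"
      using \<open>0 < s\<close> by (intro mult_right_mono) (auto simp: k_def)
    then have "k * s < e" using \<open>0 < s\<close> \<open>0 < e\<close> by simp
    moreover obtain x where "infdist x A = s" "dist x a \<le> (1 + k) * s"
      using far_point_near_normal_ray[OF assms k] by blast
    ultimately show "\<exists>x. infdist x A = s \<and> dist x a < s + e"
      by (auto simp: algebra_simps)
  qed
qed

lemma touching_point_at_frontier:
  assumes b: "b \<in> A" "b \<in> closure (- A)" and s: "0 < s" "s < t"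
  shows "\<exists>x. infdist x A = s \<and> dist x b = s"
proof (rule touching_point_if_approx[OF b(1) s(1)])
  fix e :: real assume "0 < e"
  then obtain y where y: "y \<in> - A" "dist y b < min (e / 2) s"
    using b(2) s(1) unfolding closure_approachable by (metis half_gt_zero min_less_iff_conj)
  have "0 < infdist y A" using infdist_pos_not_in_closed[OF closed_A nonempty] y(1) by auto
  moreover have "infdist y A \<le> dist y b" using infdist_le[OF b(1)] .
  ultimately obtain x where x: "infdist x A = s" "dist x (nearest y) = s"
    using touching_point_from_nearest[OF nearest(1) nearest(2)[symmetric], of y s] y(2) s(2)
    by force
  have "dist x b \<le> dist x (nearest y) + dist (nearest y) y + dist y b"
    using dist_triangle[of x b y] dist_triangle[of x y "nearest y"] by linarith
  also have "\<dots> < s + e"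
    using x(2) nearest(2)[of y] \<open>infdist y A \<le> dist y b\<close> y(2) by (simp add: dist_commute)
  finally show "\<exists>x. infdist x A = s \<and> dist x b < s + e" using x(1) by blast
qed

end

lemma reach_pos_imp_unique_nearest:
  assumes "closed A" "0 < reach A"
  obtains t where "unique_nearest A t"
proof -
  obtain t where "0 < t" "\<forall>x. infdist x A < t \<longrightarrow> (\<exists>!a. a \<in> A \<and> dist x a = infdist x A)"
    using assms(2) unfolding reach_def less_Sup_iff by auto
  then show ?thesis using that unique_nearest.intro[OF assms(1)] by blast
qed

lemma ball_infdist_subset_compl: "ball x (infdist x A) \<subseteq> - A"
  using infdist_le[of _ A x] by (auto simp: not_le[symmetric])

lemma nor_cone_scaleR: "v \<in> nor_cone A b \<Longrightarrow> 0 \<le> a \<Longrightarrow> a *\<^sub>R v \<in> nor_cone A b"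
  unfolding nor_cone_def polar_def by (auto simp: mult_nonneg_nonpos)

lemma touching_point_in_nor_cone:
  fixes A :: "'a::euclidean_space set"
  assumes b: "b \<in> A" and x: "infdist x A = dist x b"
  shows "x - b \<in> nor_cone A b"
proof -
  have "inner (x - b) w \<le> 0" if tangent: "w \<in> unit_tangents A b" for w
  proof -
    obtain xs where xs: "\<And>n. xs n \<in> A - {b}" "xs \<longlonglongrightarrow> b"
      and w: "(\<lambda>n. (1 / norm (xs n - b)) *\<^sub>R (xs n - b)) \<longlonglongrightarrow> w"
      using tangent unfolding unit_tangents_def by blast
    have "inner (x - b) ((1 / norm (xs n - b)) *\<^sub>R (xs n - b)) \<le> norm (xs n - b) / 2" for n
    proof -
      define v where "v = xs n - b"
      have "v \<noteq> 0" using xs(1)[of n] by (auto simp: v_def)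
      have "dist x b \<le> dist x (xs n)" using infdist_le[of "xs n" A x] xs(1) x by auto
      then have "(norm (x - b))\<^sup>2 \<le> (norm ((x - b) - v))\<^sup>2"
        by (simp add: v_def dist_norm power_mono algebra_simps)
      then have "2 * inner (x - b) v \<le> (norm v)\<^sup>2"
        unfolding power2_norm_eq_inner by (simp add: inner_diff_left inner_diff_right inner_commute)
      then have "inner (x - b) v / norm v \<le> norm v / 2"
        using \<open>v \<noteq> 0\<close> by (simp add: pos_divide_le_eq power2_eq_square)
      moreover have "inner (x - b) ((1 / norm v) *\<^sub>R v) = inner (x - b) v / norm v" by simp
      ultimately show ?thesis unfolding v_def[symmetric] by linarith
    qed
    moreover have "(\<lambda>n. inner (x - b) ((1 / norm (xs n - b)) *\<^sub>R (xs n - b))) \<longlonglongrightarrow> inner (x - b) w"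
      by (intro tendsto_intros w)
    moreover have "(\<lambda>n. norm (xs n - b) / 2) \<longlonglongrightarrow> 0"
      using tendsto_norm_zero[OF LIM_zero[OF xs(2)]] by (intro tendsto_divide_zero)
    ultimately show ?thesis by (meson LIMSEQ_le)
  qed
  then show ?thesis
    unfolding nor_cone_def polar_def tan_cone_def by (auto simp: mult_nonneg_nonpos)
qed

lemma eventually_descent_along:
  fixes f :: "'a::real_inner \<Rightarrow> real"
  assumes "GDERIV f b :> g" and "inner g w < 0"
  shows "eventually (\<lambda>h. f (b + h *\<^sub>R w) < f b) (at_right 0)"
proof -
  have "((\<lambda>h. b + h *\<^sub>R w) has_derivative (\<lambda>h. h *\<^sub>R w)) (at 0)"
    by (auto intro!: derivative_eq_intros)
  moreover have "(f has_derivative (\<lambda>h. inner h g)) (at (b + 0 *\<^sub>R w))"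
    using assms(1) by (simp add: gderiv_def)
  ultimately have "((\<lambda>h. f (b + h *\<^sub>R w)) has_derivative (\<lambda>h. inner (h *\<^sub>R w) g)) (at 0)"
    by (rule has_derivative_compose)
  moreover have "(\<lambda>h. inner (h *\<^sub>R w) g) = (*) (inner g w)"
    by (auto simp: inner_commute)
  ultimately have "((\<lambda>h. f (b + h *\<^sub>R w)) has_real_derivative inner g w) (at 0)"
    by (simp add: has_field_derivative_def)
  from has_real_derivative_neg_dec_right[OF this assms(2)]
  show ?thesis unfolding eventually_at_right_field by auto
qed

lemma exists_descent_point:
  fixes f :: "'a::real_inner \<Rightarrow> real"
  assumes "GDERIV f b :> g" and "inner g w < 0"
    and "eventually (\<lambda>h. b + h *\<^sub>R w \<in> S) (at_right 0)" and "0 < \<delta>"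
  shows "\<exists>y\<in>S. dist y b < \<delta> \<and> f y < f b"
proof -
  have "((\<lambda>h. b + h *\<^sub>R w) \<longlongrightarrow> b + 0 *\<^sub>R w) (at_right 0)"
    by (intro tendsto_intros)
  then have "eventually (\<lambda>h. dist (b + h *\<^sub>R w) b < \<delta>) (at_right 0)"
    using assms(4) tendstoD by fastforce
  with assms(3) eventually_descent_along[OF assms(1,2)]
  have "eventually (\<lambda>h. b + h *\<^sub>R w \<in> S \<and> dist (b + h *\<^sub>R w) b < \<delta> \<and> f (b + h *\<^sub>R w) < f b)
    (at_right 0)"
    by eventually_elim blast
  then show ?thesis
    using eventually_happens'[OF trivial_limit_at_right_real] by blast
qed

lemma compl_closure_eq_compl_interior: "compl_closure X = - interior X"
  unfolding compl_closure_def by (simp add: Compl_eq_Diff_UNIV[symmetric] closure_complement)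

lemma differentiable_imp_GDERIV:
  fixes f :: "'a::euclidean_space \<Rightarrow> real"
  assumes "f differentiable (at x)"
  obtains g where "GDERIV f x :> g"
proof -
  obtain D where D: "(f has_derivative D) (at x)"
    using assms by (auto simp: differentiable_def)
  have "D = (\<lambda>h. inner h (adjoint D 1))"
    using adjoint_works[OF has_derivative_linear[OF D]] by auto
  then have "GDERIV f x :> adjoint D 1" using D by (simp add: gderiv_def)
  then show ?thesis by (rule that)
qed

lemma separating_direction:
  fixes u g :: "'a::real_inner"
  assumes u: "norm u = 1" and g: "\<And>a. 0 \<le> a \<Longrightarrow> g \<noteq> a *\<^sub>R u"
  shows "0 < inner u (norm g *\<^sub>R u - g)" and "inner g (norm g *\<^sub>R u - g) < 0"
proof -
  have "inner u g \<le> norm g"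
    using norm_cauchy_schwarz[of u g] u by simp
  moreover have "inner u g \<noteq> norm g"
    using norm_cauchy_schwarz_eq[of u g] u g[of "norm g"] by auto
  ultimately have pos: "0 < norm g - inner u g" by simp
  have uu: "inner u u = 1" using u by (simp add: dot_square_norm)
  show "0 < inner u (norm g *\<^sub>R u - g)"
    using pos by (simp add: inner_diff_right uu)
  have "g \<noteq> 0" using g[of 0] by simp
  have "inner g (norm g *\<^sub>R u - g) = - norm g * (norm g - inner u g)"
    by (simp add: inner_diff_right inner_commute algebra_simps dot_square_norm power2_eq_square)
  then show "inner g (norm g *\<^sub>R u - g) < 0"
    using pos \<open>g \<noteq> 0\<close> by (simp add: mult_pos_pos)
qed

lemma eventually_in_ball_along:
  fixes x b w :: "'a::real_inner"
  assumes "0 < inner (x - b) w"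
  shows "eventually (\<lambda>h. b + h *\<^sub>R w \<in> ball x (dist x b)) (at_right 0)"
  unfolding eventually_at_right_field
proof (intro exI conjI allI impI)
  let ?h0 = "2 * inner (x - b) w / ((norm w)\<^sup>2 + 1)"
  show "0 < ?h0" using assms by (simp add: add_nonneg_pos)
  fix h :: real assume h: "0 < h" "h < ?h0"
  then have "h * ((norm w)\<^sup>2 + 1) < 2 * inner (x - b) w"
    by (simp add: pos_less_divide_eq add_nonneg_pos)
  then have "h * (norm w)\<^sup>2 < 2 * inner (x - b) w" using h by (simp add: algebra_simps)
  then have "h * (h * (norm w)\<^sup>2) < h * (2 * inner (x - b) w)" using h by simp
  moreover have "x - (b + h *\<^sub>R w) = (x - b) - h *\<^sub>R w" by simp
  then have "(dist x (b + h *\<^sub>R w))\<^sup>2 = (dist x b)\<^sup>2 - 2 * h * inner (x - b) w + h\<^sup>2 * (norm w)\<^sup>2"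
    unfolding dist_norm power2_norm_eq_inner
    by (simp add: inner_diff_left inner_diff_right inner_commute algebra_simps power2_eq_square)
  ultimately have "(dist x (b + h *\<^sub>R w))\<^sup>2 < (dist x b)\<^sup>2"
    by (simp add: power2_eq_square algebra_simps)
  then show "b + h *\<^sub>R w \<in> ball x (dist x b)"
    by (simp add: power2_less_imp_less)
qed

lemma descent_point_at_frontier:
  fixes X :: "'a::euclidean_space set"
  assumes reach: "unique_nearest (compl_closure X) t"
    and X: "closure (interior X) = X" and b: "b \<in> X" "b \<notin> interior X"
    and g: "GDERIV f b :> g" "g \<notin> nor_cone (compl_closure X) b" and "0 < \<delta>"
  shows "\<exists>y\<in>interior X. dist y b < \<delta> \<and> f y < f b"
proof -
  interpret unique_nearest "compl_closure X" t by (rule reach)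
  define s where "s = t / 2"
  have s: "0 < s" "s < t" using t_pos by (auto simp: s_def)
  have "b \<in> compl_closure X" "b \<in> closure (- compl_closure X)"
    using b X by (auto simp: compl_closure_eq_compl_interior)
  then obtain x where x: "infdist x (compl_closure X) = s" "dist x b = s"
    using touching_point_at_frontier s by blast
  define u where "u = (1 / s) *\<^sub>R (x - b)"
  have "norm u = 1" using x s by (simp add: u_def dist_norm)
  have "u \<in> nor_cone (compl_closure X) b"
    unfolding u_def using s x \<open>b \<in> compl_closure X\<close>
    by (intro nor_cone_scaleR touching_point_in_nor_cone) auto
  then have "g \<noteq> a *\<^sub>R u" if "0 \<le> a" for a
    using g(2) nor_cone_scaleR that by metis
  from separating_direction[OF \<open>norm u = 1\<close> this]
  have w: "0 < inner u (norm g *\<^sub>R u - g)" "inner g (norm g *\<^sub>R u - g) < 0" by auto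
  then have "0 < inner (x - b) (norm g *\<^sub>R u - g)"
    using s by (simp add: u_def zero_less_divide_iff)
  from eventually_in_ball_along[OF this]
  have "eventually (\<lambda>h. b + h *\<^sub>R (norm g *\<^sub>R u - g) \<in> interior X) (at_right 0)"
    using ball_infdist_subset_compl[of x "compl_closure X"] x
    by (auto simp: compl_closure_eq_compl_interior elim!: eventually_mono)
  from exists_descent_point[OF g(1) w(2) this \<open>0 < \<delta>\<close>] show ?thesis .
qed

lemma descent_point_in_interior:
  fixes f :: "'a::real_inner \<Rightarrow> real"
  assumes b: "b \<in> interior X" and g: "GDERIV f b :> g" "g \<noteq> 0" and "0 < \<delta>"
  shows "\<exists>y\<in>interior X. dist y b < \<delta> \<and> f y < f b"
proof (rule exists_descent_point[OF g(1) _ _ \<open>0 < \<delta>\<close>])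
  show "inner g (- g) < 0" using g(2) by simp
  have "((\<lambda>h. b + h *\<^sub>R (- g)) \<longlongrightarrow> b + 0 *\<^sub>R (- g)) (at_right 0)"
    by (intro tendsto_intros)
  then show "eventually (\<lambda>h. b + h *\<^sub>R (- g) \<in> interior X) (at_right 0)"
    using b by (simp add: topological_tendstoD)
qed

lemma strict_sublevel_approx_by_interior:
  fixes X :: "'a::metric_space set" and f :: "'a \<Rightarrow> real"
  assumes X: "closure (interior X) = X" and f: "continuous_on UNIV f"
    and b: "b \<in> X" "f b < c" and "0 < \<delta>"
  shows "\<exists>y\<in>interior X. dist y b < \<delta> \<and> f y < c"
proof -
  have "open {y. f y < c}" by (rule open_Collect_less[OF f continuous_on_const])
  then obtain e where "0 < e" and e: "ball b e \<subseteq> {y. f y < c}"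
    using b(2) by (meson mem_Collect_eq openE)
  have "b \<in> closure (interior X)" using b X by simp
  then obtain y where "y \<in> interior X" "dist y b < min \<delta> e"
    using \<open>0 < e\<close> \<open>0 < \<delta>\<close> unfolding closure_approachable by (metis min_less_iff_conj)
  moreover from this have "y \<in> ball b e" by (simp add: dist_commute)
  ultimately show ?thesis using e by auto
qed

lemma regular_sublevel_approx_by_interior:
  fixes X :: "'a::euclidean_space set"
  assumes X: "closure (interior X) = X" and reach: "unique_nearest (compl_closure X) t"
    and f: "\<And>x. f differentiable (at x)" and c: "regular_value f X c"
    and b: "b \<in> X" "f b \<le> c" and "0 < \<delta>"
  shows "\<exists>y\<in>interior X. dist y b < \<delta> \<and> f y < c"
proof (cases "f b < c")
  case True
  have "continuous_on UNIV f"
    using f by (simp add: continuous_at_imp_continuous_on differentiable_imp_continuous_within)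
  from strict_sublevel_approx_by_interior[OF X this b(1) True \<open>0 < \<delta>\<close>] show ?thesis .
next
  case False
  then have "f b = c" using b by simp
  obtain g where g: "GDERIV f b :> g" using differentiable_imp_GDERIV f by blast
  have not_crit: "g \<notin> uminus ` nor_cone_X X b"
    using c b g \<open>f b = c\<close> unfolding regular_value_def critical_point_def by blast
  show ?thesis
  proof (cases "b \<in> interior X")
    case True
    then have "g \<noteq> 0" using not_crit by (simp add: nor_cone_X_def)
    from descent_point_in_interior[OF True g this \<open>0 < \<delta>\<close>] show ?thesis using \<open>f b = c\<close> by simp
  next
    case False
    then have "g \<notin> nor_cone (compl_closure X) b"
      using not_crit by (simp add: nor_cone_X_def image_image)
    from descent_point_at_frontier[OF reach X b(1) False g this \<open>0 < \<delta>\<close>]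
    show ?thesis using \<open>f b = c\<close> by simp
  qed
qed

lemma inner_parallel_subset_interior: "0 < r \<Longrightarrow> inner_parallel X r \<subseteq> interior X"
  using infdist_zero[of _ "compl_closure X"]
  by (fastforce simp: inner_parallel_def compl_closure_eq_compl_interior)

lemma eventually_mem_inner_parallel:
  assumes "y \<in> interior X" and "compl_closure X \<noteq> {}"
  shows "eventually (\<lambda>r. y \<in> inner_parallel X r) (at_right 0)"
proof -
  have "0 < infdist y (compl_closure X)"
    using assms infdist_pos_not_in_closed[of "compl_closure X" y]
    by (simp add: compl_closure_eq_compl_interior closed_Compl)
  then show ?thesis
    unfolding eventually_at_right_field inner_parallel_def by (auto intro: less_imp_le)
qed

lemma eventually_mem_perturbed_sublevel:
  fixes f :: "'a::real_normed_vector \<Rightarrow> real"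
  assumes "isCont f y" and "f y < c"
  shows "eventually (\<lambda>r. f (y + r *\<^sub>R \<eta> y) \<le> c) (at_right 0)"
proof -
  have "((\<lambda>r. y + r *\<^sub>R \<eta> y) \<longlongrightarrow> y + 0 *\<^sub>R \<eta> y) (at_right 0)"
    by (intro tendsto_intros)
  then have "((\<lambda>r. f (y + r *\<^sub>R \<eta> y)) \<longlongrightarrow> f y) (at_right 0)"
    using isCont_tendsto_compose[OF assms(1)] by simp
  from order_tendstoD(2)[OF this assms(2)] show ?thesis
    by (rule eventually_mono) simp
qed

lemma eventually_compact_near_family:
  fixes S :: "'a::metric_space set"
  assumes "compact S" and "\<And>b. b \<in> S \<Longrightarrow> \<exists>y. dist b y < e \<and> eventually (\<lambda>r. y \<in> B r) F"
  shows "eventually (\<lambda>r. \<forall>b\<in>S. \<exists>y\<in>B r. dist b y < e) F"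
proof -
  obtain Y where Y: "\<And>b. b \<in> S \<Longrightarrow> dist b (Y b) < e \<and> eventually (\<lambda>r. Y b \<in> B r) F"
    using assms(2) by metis
  have "S \<subseteq> (\<Union>b\<in>S. ball b (e - dist b (Y b)))"
  proof
    fix b assume "b \<in> S"
    then have "b \<in> ball b (e - dist b (Y b))" using Y by simp
    with \<open>b \<in> S\<close> show "b \<in> (\<Union>b\<in>S. ball b (e - dist b (Y b)))" by (rule UN_I)
  qed
  then obtain C where C: "C \<subseteq> S" "finite C" "S \<subseteq> (\<Union>b\<in>C. ball b (e - dist b (Y b)))"
    by (rule compactE_image[OF assms(1) open_ball])
  have "eventually (\<lambda>r. \<forall>b'\<in>C. Y b' \<in> B r) F"
    using C Y by (intro eventually_ball_finite) auto
  then show ?thesis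
  proof (rule eventually_mono)
    fix r assume r: "\<forall>b'\<in>C. Y b' \<in> B r"
    show "\<forall>b\<in>S. \<exists>y\<in>B r. dist b y < e"
    proof
      fix b assume "b \<in> S"
      then obtain b' where "b' \<in> C" "dist b' b < e - dist b' (Y b')" using C(3) by auto
      then have "dist b (Y b') < e" using dist_triangle[of b "Y b'" b'] by (simp add: dist_commute)
      then show "\<exists>y\<in>B r. dist b y < e" using r \<open>b' \<in> C\<close> by blast
    qed
  qed
qed

lemma eventually_perturbed_sublevel_near_sublevel:
  fixes f :: "'a::euclidean_space \<Rightarrow> real"
  assumes X: "compact X" and f: "continuous_on UNIV f" and \<eta>: "\<And>x. norm (\<eta> x) \<le> 1" and "0 < e"
  shows "eventually (\<lambda>r. \<forall>a\<in>X. f (a + r *\<^sub>R \<eta> a) \<le> c \<longrightarrow> (\<exists>b\<in>X \<inter> f -` {..c}. dist a b < e))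
    (at_right 0)"
proof -
  define K where "K = X - (\<Union>b\<in>X \<inter> f -` {..c}. ball b e)"
  have K: "compact K" unfolding K_def using X by (intro compact_diff) auto
  have V: "closed {z. f z \<le> c}" by (rule closed_Collect_le[OF f continuous_on_const])
  have KV: "K \<inter> {z. f z \<le> c} = {}" using \<open>0 < e\<close> by (force simp: K_def)
  obtain d where "0 < d" and d: "\<forall>x\<in>K. \<forall>z\<in>{z. f z \<le> c}. d \<le> dist x z"
    using separate_compact_closed[OF K V KV] by blast
  have "eventually (\<lambda>r. 0 < r \<and> r < d) (at_right 0)"
    unfolding eventually_at_right_field using \<open>0 < d\<close> by auto
  then show ?thesis
  proof (rule eventually_mono)
    fix r assume r: "0 < r \<and> r < d"
    show "\<forall>a\<in>X. f (a + r *\<^sub>R \<eta> a) \<le> c \<longrightarrow> (\<exists>b\<in>X \<inter> f -` {..c}. dist a b < e)"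
    proof (intro ballI impI)
      fix a assume "a \<in> X" "f (a + r *\<^sub>R \<eta> a) \<le> c"
      have "dist a (a + r *\<^sub>R \<eta> a) = norm (r *\<^sub>R \<eta> a)"
        by (metis add_diff_cancel_left' dist_norm dist_commute)
      also have "\<dots> = r * norm (\<eta> a)" using r by simp
      also have "\<dots> < d" using mult_left_mono[OF \<eta>[of a], of r] r by linarith
      finally have "dist a (a + r *\<^sub>R \<eta> a) < d" .
      then have "a \<notin> K" using d \<open>f (a + r *\<^sub>R \<eta> a) \<le> c\<close> by fastforce
      then show "\<exists>b\<in>X \<inter> f -` {..c}. dist a b < e"
        using \<open>a \<in> X\<close> by (auto simp: K_def dist_commute)
    qed
  qed
qed

lemma eventually_inner_parallel_sublevel_near_sublevel:
  fixes f :: "'a::euclidean_space \<Rightarrow> real"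
  assumes "compact X" and "continuous_on UNIV f" and "\<And>x. norm (\<eta> x) \<le> 1" and "0 < e"
  shows "eventually (\<lambda>r. \<forall>a\<in>inner_parallel X r \<inter> (\<lambda>x. f (x + r *\<^sub>R \<eta> x)) -` {..c}.
    \<exists>b\<in>X \<inter> f -` {..c}. dist a b < e) (at_right 0)"
proof -
  have "eventually (\<lambda>r. 0 < r) (at_right (0::real))" by (simp add: eventually_at_right_less)
  with eventually_perturbed_sublevel_near_sublevel[where c = c and \<eta> = \<eta>, OF assms] show ?thesis
    by eventually_elim (use inner_parallel_subset_interior interior_subset in blast)
qed

lemma eventually_sublevel_near_inner_parallel_sublevel:
  fixes X :: "'a::euclidean_space set" and f :: "'a \<Rightarrow> real"
  assumes X: "compact X" "closure (interior X) = X" and reach: "unique_nearest (compl_closure X) t"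
    and diff: "\<And>x. f differentiable (at x)" and c: "regular_value f X c" and "0 < e"
  shows "eventually (\<lambda>r. \<forall>b\<in>X \<inter> f -` {..c}.
    \<exists>a\<in>inner_parallel X r \<inter> (\<lambda>x. f (x + r *\<^sub>R \<eta> x)) -` {..c}. dist b a < e) (at_right 0)"
proof (rule eventually_compact_near_family)
  have "continuous_on UNIV f"
    using diff by (simp add: continuous_at_imp_continuous_on differentiable_imp_continuous_within)
  then show "compact (X \<inter> f -` {..c})"
    using X(1) continuous_closed_vimage[OF closed_atMost]
    by (intro compact_Int_closed) (auto simp: continuous_on_eq_continuous_at)
  fix b assume "b \<in> X \<inter> f -` {..c}"
  then obtain y where "y \<in> interior X" "dist y b < e" "f y < c"
    using regular_sublevel_approx_by_interior[OF X(2) reach diff c _ _ \<open>0 < e\<close>] by auto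
  have "isCont f y" using diff by (rule differentiable_imp_continuous_within)
  have "compl_closure X \<noteq> {}" using unique_nearest.nonempty[OF reach] .
  with \<open>y \<in> interior X\<close> \<open>isCont f y\<close> \<open>f y < c\<close>
  have "eventually (\<lambda>r. y \<in> inner_parallel X r \<and> f (y + r *\<^sub>R \<eta> y) \<le> c) (at_right 0)"
    by (intro eventually_conj eventually_mem_inner_parallel eventually_mem_perturbed_sublevel)
  then have "eventually (\<lambda>r. y \<in> inner_parallel X r \<inter> (\<lambda>x. f (x + r *\<^sub>R \<eta> x)) -` {..c})
      (at_right 0)"
    by (rule eventually_mono) simp
  with \<open>dist y b < e\<close> show "\<exists>y. dist b y < e \<and>
      eventually (\<lambda>r. y \<in> inner_parallel X r \<inter> (\<lambda>x. f (x + r *\<^sub>R \<eta> x)) -` {..c}) (at_right 0)"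
    by (auto simp: dist_commute)
qed

lemma hausdorff_dist_nonneg: "0 \<le> hausdorff_dist A B"
proof -
  have "0 \<le> (SUP a\<in>A. ereal (infdist a B))" if "a \<in> A" for a
    using SUP_upper[OF that, of "\<lambda>a. ereal (infdist a B)"] infdist_nonneg[of a B]
    by (meson ereal_less_eq(5) order_trans)
  then show ?thesis unfolding hausdorff_dist_def by (auto simp: le_max_iff_disj)
qed

lemma hausdorff_dist_le:
  assumes "0 < e" and "\<forall>a\<in>A. \<exists>b\<in>B. dist a b < e" and "\<forall>b\<in>B. \<exists>a\<in>A. dist b a < e"
  shows "hausdorff_dist A B \<le> ereal e"
proof -
  have "infdist a B \<le> e" if "a \<in> A" for a
    using assms(2) that infdist_le[of _ B a] by (meson less_imp_le order_trans)
  moreover have "infdist b A \<le> e" if "b \<in> B" for b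
    using assms(3) that infdist_le[of _ A b] by (meson less_imp_le order_trans)
  ultimately show ?thesis
    using assms unfolding hausdorff_dist_def by (auto intro!: SUP_least)
qed

lemma tendsto_hausdorff_dist_0I:
  assumes "\<And>e. 0 < e \<Longrightarrow> eventually (\<lambda>x. \<forall>a\<in>A x. \<exists>b\<in>B x. dist a b < e) F"
    and "\<And>e. 0 < e \<Longrightarrow> eventually (\<lambda>x. \<forall>b\<in>B x. \<exists>a\<in>A x. dist b a < e) F"
  shows "((\<lambda>x. hausdorff_dist (A x) (B x)) \<longlongrightarrow> 0) F"
proof (rule order_tendstoI)
  fix a :: ereal assume "a < 0"
  then show "eventually (\<lambda>x. a < hausdorff_dist (A x) (B x)) F"
    using hausdorff_dist_nonneg order_less_le_trans by (intro always_eventually) blast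
next
  fix a :: ereal assume "0 < a"
  then obtain e where "0 < e" "ereal e < a" using ereal_dense2 by force
  from eventually_conj[OF assms(1,2)[OF \<open>0 < e\<close>]]
  show "eventually (\<lambda>x. hausdorff_dist (A x) (B x) < a) F"
    by eventually_elim (use hausdorff_dist_le[OF \<open>0 < e\<close>] \<open>ereal e < a\<close> in fastforce)
qed

theorem mainTheorem11:
  fixes X :: "'a::euclidean_space set" and f :: "'a \<Rightarrow> real"
    and \<eta> :: "'a \<Rightarrow> 'a" and c :: real
  assumes "complementary_regular X"
    and "Ck 2 f"
    and "regular_value f X c"
    and "smooth_map \<eta>"
    and "\<forall>x. norm (\<eta> x) \<le> 1"
  shows "((\<lambda>r. hausdorff_dist
              (inner_parallel X r \<inter> (\<lambda>x. f (x + r *\<^sub>R \<eta> x)) -` {..c})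
              (X \<inter> f -` {..c})) \<longlongrightarrow> 0) (at_right 0)"
proof -
  have X: "compact X" "closure (interior X) = X" and "0 < reach (compl_closure X)"
    using assms(1) unfolding complementary_regular_def by auto
  then obtain t where reach: "unique_nearest (compl_closure X) t"
    using reach_pos_imp_unique_nearest[of "compl_closure X"] by (auto simp: compl_closure_def)
  have diff: "f differentiable (at x)" for x using assms(2) by (simp add: numeral_2_eq_2)
  then have cont: "continuous_on UNIV f"
    by (simp add: continuous_at_imp_continuous_on differentiable_imp_continuous_within)
  show ?thesis
    using eventually_inner_parallel_sublevel_near_sublevel[where \<eta> = \<eta>,
        OF X(1) cont assms(5)[rule_format]]
      eventually_sublevel_near_inner_parallel_sublevel[OF X reach diff assms(3)]
    by (rule tendsto_hausdorff_dist_0I)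
qed

end
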